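(* Let $A=(a_i)_{i=1,\dots,n}$ be a sequence of distinct integers between $1$ and $n$ whose permutation graph $G_A$ is bipartite, and let $I,J$ be maximum feasible sets for $A$. Suppose that $(A,I,J)$ has no forbidden pairs, and let $a_i,a_j$ be the elements of the leftmost mixed pile $P_t$, with $i\in I$ and $j\in J$. Then at least one of $(I\setminus\{i\})\cup\{j\}$ and $(J\setminus\{j\})\cup\{i\}$ is feasible.
   Context: A set $I\subseteq[n]$ is feasible for $A$ if $a_i<a_j$ for all $i,j\in I$ with $i<j$; a maximum feasible set is one of largest cardinality. The permutation graph $G_A$ has vertex set $[n]$ and, for $i<j$, an edge $\{i,j\}$ iff $a_i>a_j$. Piles: set $a_0=0$; start with empty piles $P_0,\dots,P_n$; for $i=0,1,\dots,n$ in order, put $a_i$ on top of the pile $P_j$ with smallest index $j$ such that $P_j$ is empty or the top element of $P_j$ is greater than $a_i$; let $P_0,\dots,P_k$ be the resulting nonempty piles. A pile is mixed if it contains exactly two elements $a_i$ and $a_j$ with $i\in I$ and $j\in J$ (with $i\ne j$, so that $i\notin J$, $j\notin I$). A mixed pile $P_t$ is the leftmost mixed pile if no pile $P_s$ with $s<t$ is mixed. A pair of mixed piles is a forbidden pair if the four vertices (indices) of their elements induce a cycle of length $4$ in $G_A$. *)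

theory Defs
  imports Main
begin

(* A sequence a_1..a_n is modelled by a :: nat => nat, only values on {1..n} matter. *)

definition is_perm_seq :: "(nat \<Rightarrow> nat) \<Rightarrow> nat \<Rightarrow> bool" where
  "is_perm_seq a n \<longleftrightarrow> inj_on a {1..n} \<and> a ` {1..n} \<subseteq> {1..n}"

definition feasible :: "(nat \<Rightarrow> nat) \<Rightarrow> nat \<Rightarrow> nat set \<Rightarrow> bool" where
  "feasible a n I \<longleftrightarrow> I \<subseteq> {1..n} \<and> (\<forall>i\<in>I. \<forall>j\<in>I. i < j \<longrightarrow> a i < a j)"

definition max_feasible :: "(nat \<Rightarrow> nat) \<Rightarrow> nat \<Rightarrow> nat set \<Rightarrow> bool" where
  "max_feasible a n I \<longleftrightarrow> feasible a n I \<and> (\<forall>K. feasible a n K \<longrightarrow> card K \<le> card I)"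

definition pedge :: "(nat \<Rightarrow> nat) \<Rightarrow> nat \<Rightarrow> nat \<Rightarrow> nat \<Rightarrow> bool" where
  "pedge a n u v \<longleftrightarrow> u \<in> {1..n} \<and> v \<in> {1..n} \<and>
     ((u < v \<and> a u > a v) \<or> (v < u \<and> a v > a u))"

definition perm_graph_bipartite :: "(nat \<Rightarrow> nat) \<Rightarrow> nat \<Rightarrow> bool" where
  "perm_graph_bipartite a n \<longleftrightarrow>
     (\<exists>X. X \<subseteq> {1..n} \<and> (\<forall>u v. pedge a n u v \<longrightarrow> (u \<in> X \<longleftrightarrow> v \<notin> X)))"

(* Patience sorting. Piles store indices (pile P_j holds the elements a_i, recorded by i);
   the head of a list is the top of the pile. a_0 = 0. *)
definition seq0 :: "(nat \<Rightarrow> nat) \<Rightarrow> nat \<Rightarrow> nat" where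
  "seq0 a i = (if i = 0 then 0 else a i)"

definition pile_step :: "(nat \<Rightarrow> nat) \<Rightarrow> (nat \<Rightarrow> nat list) \<Rightarrow> nat \<Rightarrow> (nat \<Rightarrow> nat list)" where
  "pile_step a P i =
     (let j = (LEAST j. P j = [] \<or> seq0 a (hd (P j)) > seq0 a i) in P(j := i # P j))"

definition piles :: "(nat \<Rightarrow> nat) \<Rightarrow> nat \<Rightarrow> nat \<Rightarrow> nat list" where
  "piles a n = foldl (pile_step a) (\<lambda>_. []) [0..<Suc n]"

definition mixed :: "(nat \<Rightarrow> nat) \<Rightarrow> nat \<Rightarrow> nat set \<Rightarrow> nat set \<Rightarrow> nat \<Rightarrow> bool" where
  "mixed a n I J t \<longleftrightarrow> length (piles a n t) = 2 \<and>
     (\<exists>i j. set (piles a n t) = {i, j} \<and> i \<in> I \<and> j \<in> J \<and> i \<noteq> j)"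

definition leftmost_mixed :: "(nat \<Rightarrow> nat) \<Rightarrow> nat \<Rightarrow> nat set \<Rightarrow> nat set \<Rightarrow> nat \<Rightarrow> bool" where
  "leftmost_mixed a n I J t \<longleftrightarrow> mixed a n I J t \<and> (\<forall>s<t. \<not> mixed a n I J s)"

definition induces_C4 :: "(nat \<Rightarrow> nat) \<Rightarrow> nat \<Rightarrow> nat set \<Rightarrow> bool" where
  "induces_C4 a n S \<longleftrightarrow> (\<exists>v1 v2 v3 v4. S = {v1, v2, v3, v4} \<and> distinct [v1, v2, v3, v4] \<and>
     pedge a n v1 v2 \<and> pedge a n v2 v3 \<and> pedge a n v3 v4 \<and> pedge a n v4 v1 \<and>
     \<not> pedge a n v1 v3 \<and> \<not> pedge a n v2 v4)"

definition forbidden_pair :: "(nat \<Rightarrow> nat) \<Rightarrow> nat \<Rightarrow> nat set \<Rightarrow> nat set \<Rightarrow> nat \<Rightarrow> nat \<Rightarrow> bool" where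
  "forbidden_pair a n I J s t \<longleftrightarrow> s \<noteq> t \<and> mixed a n I J s \<and> mixed a n I J t \<and>
     induces_C4 a n (set (piles a n s) \<union> set (piles a n t))"

definition no_forbidden_pairs :: "(nat \<Rightarrow> nat) \<Rightarrow> nat \<Rightarrow> nat set \<Rightarrow> nat set \<Rightarrow> bool" where
  "no_forbidden_pairs a n I J \<longleftrightarrow> (\<forall>s t. \<not> forbidden_pair a n I J s t)"

end

theory Submission
  imports Defs
begin

(* Patience sorting places every index in a pile so that each pile is a run of decreasing values,
   hence a clique of G_A, while an increasing pair always goes from a lower to a higher pile.  So a
   feasible set meets every pile at most once, and a longest chain built backwards through the piles
   shows that a maximum feasible set meets each of the piles 1..height exactly once.  In a bipartite
   G_A every pile has at most two elements.  Below the leftmost mixed pile t, I and J choose the same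
   element of every pile, so those elements precede both i and j; swapping the choice at pile t is
   therefore feasible as soon as the new element precedes the choice at pile t + 1.  If neither swap
   works, the choices y of I and z of J at pile t + 1 are distinct, pile t + 1 is mixed, and
   i - j - y - z - i is an induced 4-cycle: a forbidden pair. *)

definition piles_cover :: "nat \<Rightarrow> (nat \<Rightarrow> nat list) \<Rightarrow> bool" where
  "piles_cover m S \<longleftrightarrow>
     (\<forall>p. set (S p) \<subseteq> {..<m}) \<and> (\<forall>x<m. \<exists>p. x \<in> set (S p)) \<and>
     (\<forall>x p q. x \<in> set (S p) \<longrightarrow> x \<in> set (S q) \<longrightarrow> p = q) \<and> (\<forall>p\<ge>m. S p = [])"

definition piles_sorted :: "(nat \<Rightarrow> 'b::linorder) \<Rightarrow> (nat \<Rightarrow> nat list) \<Rightarrow> bool" where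
  "piles_sorted f S \<longleftrightarrow> (\<forall>p. sorted_wrt (\<lambda>x y. y < x \<and> f x < f y) (S p))"

definition tops_increasing :: "(nat \<Rightarrow> 'b::linorder) \<Rightarrow> (nat \<Rightarrow> nat list) \<Rightarrow> bool" where
  "tops_increasing f S \<longleftrightarrow>
     (\<forall>p q. p < q \<longrightarrow> S q \<noteq> [] \<longrightarrow> S p \<noteq> [] \<and> f (hd (S p)) < f (hd (S q)))"

definition piles_linked :: "(nat \<Rightarrow> 'b::linorder) \<Rightarrow> (nat \<Rightarrow> nat list) \<Rightarrow> bool" where
  "piles_linked f S \<longleftrightarrow> (\<forall>v p. v \<in> set (S (Suc p)) \<longrightarrow> (\<exists>u\<in>set (S p). u < v \<and> f u < f v))"

definition piles_monotone :: "(nat \<Rightarrow> 'b::linorder) \<Rightarrow> (nat \<Rightarrow> nat list) \<Rightarrow> bool" where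
  "piles_monotone f S \<longleftrightarrow>
     (\<forall>u v p q. u \<in> set (S p) \<longrightarrow> v \<in> set (S q) \<longrightarrow> u < v \<longrightarrow> f u < f v \<longrightarrow> p < q)"

definition patience_inv :: "(nat \<Rightarrow> 'b::linorder) \<Rightarrow> nat \<Rightarrow> (nat \<Rightarrow> nat list) \<Rightarrow> bool" where
  "patience_inv f m S \<longleftrightarrow> piles_cover m S \<and> piles_sorted f S \<and> tops_increasing f S \<and>
     piles_linked f S \<and> piles_monotone f S"

definition is_target_pile :: "(nat \<Rightarrow> 'b::linorder) \<Rightarrow> (nat \<Rightarrow> nat list) \<Rightarrow> nat \<Rightarrow> nat \<Rightarrow> bool" where
  "is_target_pile f S x j \<longleftrightarrow>
     (S j = [] \<or> f x < f (hd (S j))) \<and> (\<forall>p<j. S p \<noteq> [] \<and> f (hd (S p)) < f x)"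

lemma piles_cover_less: "piles_cover m S \<Longrightarrow> x \<in> set (S p) \<Longrightarrow> x < m"
  unfolding piles_cover_def by blast

lemma sorted_wrt_decreasing:
  "sorted_wrt (\<lambda>x y. y < x \<and> f x < f y) (xs :: nat list) \<Longrightarrow>
     u \<in> set xs \<Longrightarrow> v \<in> set xs \<Longrightarrow> u < v \<Longrightarrow> f v < f u"
  by (induction xs) auto

lemma sorted_wrt_decreasing_distinct:
  "sorted_wrt (\<lambda>x y. y < x \<and> f x < f y) (xs :: nat list) \<Longrightarrow> distinct xs"
  by (induction xs) auto

lemma sorted_wrt_decreasing_hd:
  "sorted_wrt (\<lambda>x y. y < x \<and> f x < f y) (xs :: nat list) \<Longrightarrow> y \<in> set xs \<Longrightarrow>
     f (hd xs) \<le> (f y :: 'b::linorder)"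
  by (cases xs) (auto simp: less_imp_le)

lemma piles_sorted_hd_le: "piles_sorted f S \<Longrightarrow> y \<in> set (S p) \<Longrightarrow> f (hd (S p)) \<le> f y"
  unfolding piles_sorted_def by (blast intro: sorted_wrt_decreasing_hd)

lemma piles_cover_insert:
  assumes cover: "piles_cover m S" and target: "is_target_pile f S m j"
  shows "piles_cover (Suc m) (S(j := m # S j))"
proof -
  have "j \<le> m"
    using cover target unfolding piles_cover_def is_target_pile_def by (meson leI order_refl)
  moreover have "m \<notin> set (S p)" for p
    using piles_cover_less[OF cover] by blast
  moreover have "\<exists>p. x \<in> set ((S(j := m # S j)) p)" if "x < m" for x
    using cover that unfolding piles_cover_def by (metis fun_upd_apply list.set_intros(2))
  ultimately show ?thesis
    using cover piles_cover_less[OF cover] unfolding piles_cover_def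
    by (auto simp: less_Suc_eq)
qed

lemma piles_sorted_insert:
  assumes sorted: "piles_sorted f S" and cover: "piles_cover m S" and target: "is_target_pile f S m j"
  shows "piles_sorted f (S(j := m # S j))"
proof -
  have "y < m \<and> f m < f y" if y: "y \<in> set (S j)" for y
  proof -
    have "f m < f (hd (S j))" using target y unfolding is_target_pile_def by auto
    also have "\<dots> \<le> f y" using piles_sorted_hd_le[OF sorted y] .
    finally show ?thesis using piles_cover_less[OF cover y] by simp
  qed
  then show ?thesis using sorted unfolding piles_sorted_def by simp
qed

lemma tops_increasing_insert:
  assumes tops: "tops_increasing f S" and target: "is_target_pile f S m j"
  shows "tops_increasing f (S(j := m # S j))"
  unfolding tops_increasing_def
proof (intro allI impI)
  fix p q assume pq: "p < q" and ne: "(S(j := m # S j)) q \<noteq> []"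
  let ?T = "S(j := m # S j)"
  show "?T p \<noteq> [] \<and> f (hd (?T p)) < f (hd (?T q))"
  proof (cases "q = j")
    case True
    then show ?thesis using target pq unfolding is_target_pile_def by auto
  next
    case False
    then have "S q \<noteq> []" using ne by simp
    then have "S p \<noteq> [] \<and> f (hd (S p)) < f (hd (S q))"
      using tops pq unfolding tops_increasing_def by blast
    moreover have "f m < f (hd (S j))" if "p = j"
      using target that calculation unfolding is_target_pile_def by auto
    ultimately show ?thesis using \<open>q \<noteq> j\<close> by auto
  qed
qed

lemma piles_linked_insert:
  assumes linked: "piles_linked f S" and cover: "piles_cover m S" and target: "is_target_pile f S m j"
  shows "piles_linked f (S(j := m # S j))"
  unfolding piles_linked_def
proof (intro allI impI)
  fix v p assume v: "v \<in> set ((S(j := m # S j)) (Suc p))"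
  have sub: "set (S p) \<subseteq> set ((S(j := m # S j)) p)" by auto
  have "\<exists>u\<in>set (S p). u < v \<and> f u < f v"
  proof (cases "v = m \<and> Suc p = j")
    case True
    then have "S p \<noteq> [] \<and> f (hd (S p)) < f m" using target unfolding is_target_pile_def by simp
    moreover have "hd (S p) < m" using calculation by (meson hd_in_set piles_cover_less[OF cover])
    ultimately show ?thesis using True by auto
  next
    case False
    have "m \<notin> set (S q)" for q using piles_cover_less[OF cover] by blast
    then have "v \<in> set (S (Suc p))" using v False by (auto split: if_splits)
    then show ?thesis using linked unfolding piles_linked_def by blast
  qed
  then show "\<exists>u\<in>set ((S(j := m # S j)) p). u < v \<and> f u < f v" using sub by blast
qed

lemma piles_monotone_insert:
  assumes mono: "piles_monotone f S" and cover: "piles_cover m S" and sorted: "piles_sorted f S"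
    and tops: "tops_increasing f S" and target: "is_target_pile f S m j"
  shows "piles_monotone f (S(j := m # S j))"
  unfolding piles_monotone_def
proof (intro allI impI)
  fix u v p q
  assume u: "u \<in> set ((S(j := m # S j)) p)" and v: "v \<in> set ((S(j := m # S j)) q)"
    and uv: "u < v" and fuv: "f u < f v"
  have old: "x \<in> set (S r)" if "x \<in> set ((S(j := m # S j)) r)" "x \<noteq> m" for x r
    using that by (auto split: if_splits)
  show "p < q"
  proof (cases "v = m")
    case True
    have "q = j"
    proof (rule ccontr)
      assume "q \<noteq> j"
      then have "m \<in> set (S q)" using v True by simp
      then show False using piles_cover_less[OF cover] by (meson less_irrefl)
    qed
    have uS: "u \<in> set (S p)" using old[OF u] uv True by simp
    show ?thesis
    proof (rule ccontr)
      assume "\<not> p < q"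
      then have "j \<le> p" using \<open>q = j\<close> by (simp add: not_less)
      have "S p \<noteq> []" using uS by auto
      have "S j \<noteq> [] \<and> f (hd (S j)) \<le> f (hd (S p))"
      proof (cases "j = p")
        case False
        then have "j < p" using \<open>j \<le> p\<close> by simp
        then show ?thesis using tops \<open>S p \<noteq> []\<close> unfolding tops_increasing_def by (meson less_imp_le)
      qed (use \<open>S p \<noteq> []\<close> in simp)
      then have "f m < f (hd (S p))" using target unfolding is_target_pile_def by auto
      then show False using piles_sorted_hd_le[OF sorted uS] fuv True by simp
    qed
  next
    case False
    then have vS: "v \<in> set (S q)" using old[OF v] by simp
    then have uS: "u \<in> set (S p)" using old[OF u] piles_cover_less[OF cover vS] uv by simp
    show ?thesis using mono uS vS uv fuv unfolding piles_monotone_def by blast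
  qed
qed

lemma patience_inv_insert:
  assumes "patience_inv f m S" "is_target_pile f S m j"
  shows "patience_inv f (Suc m) (S(j := m # S j))"
  using assms piles_cover_insert piles_sorted_insert tops_increasing_insert piles_linked_insert
    piles_monotone_insert unfolding patience_inv_def by blast

lemma Least_is_target_pile:
  assumes cover: "piles_cover m S" and fresh: "\<forall>x<m. f x \<noteq> f m"
  shows "is_target_pile f S m (LEAST j. S j = [] \<or> f m < f (hd (S j)))"
    (is "is_target_pile f S m (LEAST j. ?Q j)")
proof -
  have "?Q m" using cover unfolding piles_cover_def by simp
  then have "?Q (LEAST j. ?Q j)" by (rule LeastI)
  moreover have "S p \<noteq> [] \<and> f (hd (S p)) < f m" if "p < (LEAST j. ?Q j)" for p
  proof -
    have "\<not> ?Q p" using not_less_Least[OF that] .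
    moreover have "hd (S p) < m" using calculation by (meson hd_in_set piles_cover_less[OF cover])
    ultimately show ?thesis using fresh by (metis not_less_iff_gr_or_eq)
  qed
  ultimately show ?thesis unfolding is_target_pile_def by blast
qed

lemma patience_inv_empty: "patience_inv f 0 (\<lambda>_. [])"
  by (simp add: patience_inv_def piles_cover_def piles_sorted_def tops_increasing_def
      piles_linked_def piles_monotone_def)

lemma patience_inv_foldl:
  assumes "inj_on (seq0 a) {..<m}"
  shows "patience_inv (seq0 a) m (foldl (pile_step a) (\<lambda>_. []) [0..<m])"
  using assms
proof (induction m)
  case 0
  show ?case by (simp add: patience_inv_empty)
next
  case (Suc m)
  let ?S = "foldl (pile_step a) (\<lambda>_. []) [0..<m]"
  have inv: "patience_inv (seq0 a) m ?S"
    using Suc by (meson inj_on_subset lessThan_subset_iff le_SucI order_refl)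
  have "\<forall>x<m. seq0 a x \<noteq> seq0 a m"
    using Suc.prems by (auto dest: inj_onD)
  then have "is_target_pile (seq0 a) ?S m (LEAST j. ?S j = [] \<or> seq0 a m < seq0 a (hd (?S j)))"
    using inv unfolding patience_inv_def by (blast intro: Least_is_target_pile)
  from patience_inv_insert[OF inv this] have "patience_inv (seq0 a) (Suc m) (pile_step a ?S m)"
    by (simp only: pile_step_def Let_def)
  then show ?case by simp
qed

lemma piles_linked_chain:
  assumes "piles_linked f S" "v \<in> set (S p)"
  shows "\<exists>L. finite L \<and> card L = Suc p \<and> v \<in> L \<and> (\<forall>x\<in>L. x \<le> v \<and> f x \<le> f v) \<and>
           (\<forall>x\<in>L. \<forall>y\<in>L. x < y \<longrightarrow> f x < f y)"
  using assms(2)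
proof (induction p arbitrary: v)
  case 0
  show ?case by (intro exI[of _ "{v}"]) auto
next
  case (Suc p)
  obtain u where u: "u \<in> set (S p)" "u < v" "f u < f v"
    using assms(1) Suc.prems unfolding piles_linked_def by blast
  obtain L where L: "finite L" "card L = Suc p" "u \<in> L" "\<forall>x\<in>L. x \<le> u \<and> f x \<le> f u"
    "\<forall>x\<in>L. \<forall>y\<in>L. x < y \<longrightarrow> f x < f y"
    using Suc.IH[OF u(1)] by blast
  have below: "x < v \<and> f x < f v" if "x \<in> L" for x
    using L(4) u(2,3) that by (meson le_less_trans)
  show ?case
  proof (intro exI conjI)
    have "v \<notin> L" using below by blast
    then show "card (insert v L) = Suc (Suc p)" using L(1,2) by simp
    show "\<forall>x\<in>insert v L. x \<le> v \<and> f x \<le> f v" using below by (simp add: less_imp_le)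
    show "\<forall>x\<in>insert v L. \<forall>y\<in>insert v L. x < y \<longrightarrow> f x < f y"
      using below L(5) by (metis insert_iff less_asym)
  qed (use L(1) in auto)
qed

lemma inj_on_seq0:
  assumes "is_perm_seq a n"
  shows "inj_on (seq0 a) {..n}"
proof (rule inj_onI)
  fix x y assume x: "x \<in> {..n}" and y: "y \<in> {..n}" and eq: "seq0 a x = seq0 a y"
  have zero_iff: "seq0 a z = 0 \<longleftrightarrow> z = 0" if "z \<in> {..n}" for z
  proof -
    have "a z \<in> {1..n}" if "z \<in> {1..n}"
      using assms that unfolding is_perm_seq_def by blast
    then show ?thesis using that by (auto simp: seq0_def)
  qed
  show "x = y"
  proof (cases "x = 0 \<or> y = 0")
    case True
    then show ?thesis using zero_iff[OF x] zero_iff[OF y] eq by auto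
  next
    case False
    then have "a x = a y" "x \<in> {1..n}" "y \<in> {1..n}" using eq x y by (auto simp: seq0_def)
    then show ?thesis using assms unfolding is_perm_seq_def by (auto dest: inj_onD)
  qed
qed

lemma patience_inv_piles: "is_perm_seq a n \<Longrightarrow> patience_inv (seq0 a) (Suc n) (piles a n)"
  using patience_inv_foldl[of a "Suc n"] inj_on_seq0[of a n]
  by (simp add: piles_def lessThan_Suc_atMost)

definition precedes :: "(nat \<Rightarrow> nat) \<Rightarrow> nat \<Rightarrow> nat \<Rightarrow> bool" where
  "precedes a x y \<longleftrightarrow> x < y \<and> a x < a y"

lemma precedes_trans: "precedes a x y \<Longrightarrow> precedes a y z \<Longrightarrow> precedes a x z"
  unfolding precedes_def by auto

lemma precedes_not_pedge: "precedes a x y \<Longrightarrow> \<not> pedge a n x y"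
  unfolding precedes_def pedge_def by auto

lemma feasible_precedes:
  "feasible a n L \<Longrightarrow> x \<in> L \<Longrightarrow> y \<in> L \<Longrightarrow> x \<noteq> y \<Longrightarrow> precedes a x y \<or> precedes a y x"
  unfolding feasible_def precedes_def by (cases x y rule: linorder_cases) auto

lemma feasible_exchange:
  assumes feas: "feasible a n L" and c: "c \<in> {1..n}"
    and cmp: "\<forall>x\<in>L - {e}. precedes a x c \<or> precedes a c x"
  shows "feasible a n ((L - {e}) \<union> {c})"
  unfolding feasible_def
proof (intro conjI ballI impI)
  show "L - {e} \<union> {c} \<subseteq> {1..n}" using feas c unfolding feasible_def by blast
next
  fix x y assume "x \<in> L - {e} \<union> {c}" "y \<in> L - {e} \<union> {c}" "x < y"
  then consider "x \<in> L" "y \<in> L" | "x = c" "y \<in> L - {e}" | "x \<in> L - {e}" "y = c"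
    by auto
  then show "a x < a y"
  proof cases
    case 1
    then show ?thesis using feas \<open>x < y\<close> unfolding feasible_def by blast
  next
    case 2
    then have "precedes a y c \<or> precedes a c y" using cmp by blast
    then show ?thesis using 2(1) \<open>x < y\<close> unfolding precedes_def by auto
  next
    case 3
    then have "precedes a x c \<or> precedes a c x" using cmp by blast
    then show ?thesis using 3(2) \<open>x < y\<close> unfolding precedes_def by auto
  qed
qed

locale perm_piles =
  fixes a :: "nat \<Rightarrow> nat" and n :: nat
  assumes perm: "is_perm_seq a n"
begin

lemma cover: "piles_cover (Suc n) (piles a n)"
  and sorted: "piles_sorted (seq0 a) (piles a n)"
  and linked: "piles_linked (seq0 a) (piles a n)"
  and monotone: "piles_monotone (seq0 a) (piles a n)"
  using patience_inv_piles[OF perm] unfolding patience_inv_def by blast+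

definition pile_of :: "nat \<Rightarrow> nat" where
  "pile_of x = (THE p. x \<in> set (piles a n p))"

lemma pile_of_eq: "x \<in> set (piles a n p) \<Longrightarrow> pile_of x = p"
  unfolding pile_of_def
  by (rule the_equality) (use cover in \<open>auto simp: piles_cover_def\<close>)

lemma in_pile_le: "x \<in> set (piles a n p) \<Longrightarrow> x \<le> n"
  using piles_cover_less[OF cover] by (simp add: less_Suc_eq_le)

lemma in_pile_of: "x \<le> n \<Longrightarrow> x \<in> set (piles a n (pile_of x))"
proof -
  assume "x \<le> n"
  then have "x < Suc n" by simp
  then obtain p where "x \<in> set (piles a n p)" using cover unfolding piles_cover_def by blast
  then show ?thesis using pile_of_eq by simp
qed

lemma seq0_same_pile_less:
  "u \<in> set (piles a n p) \<Longrightarrow> v \<in> set (piles a n p) \<Longrightarrow> u < v \<Longrightarrow> seq0 a v < seq0 a u"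
  using sorted unfolding piles_sorted_def by (blast intro: sorted_wrt_decreasing)

lemma distinct_pile: "distinct (piles a n p)"
  using sorted unfolding piles_sorted_def by (blast intro: sorted_wrt_decreasing_distinct)

lemma zero_in_pile_zero: "0 \<in> set (piles a n 0)"
proof (cases "pile_of 0")
  case 0
  then show ?thesis using in_pile_of[of 0] by simp
next
  case (Suc p)
  then show ?thesis using in_pile_of[of 0] linked unfolding piles_linked_def by auto
qed

lemma in_pile_range:
  assumes x: "x \<in> set (piles a n p)" and p: "1 \<le> p"
  shows "x \<in> {1..n}"
proof -
  have "x \<noteq> 0"
  proof
    assume "x = 0"
    then show False using pile_of_eq[OF x] pile_of_eq[OF zero_in_pile_zero] p by simp
  qed
  then show ?thesis using in_pile_le[OF x] by simp
qed

lemma pile_of_pos: "x \<in> {1..n} \<Longrightarrow> 1 \<le> pile_of x"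
proof (rule ccontr)
  assume x: "x \<in> {1..n}" and "\<not> 1 \<le> pile_of x"
  then have "pile_of x = 0" by simp
  then have "x \<in> set (piles a n 0)" using in_pile_of[of x] x by simp
  then have "seq0 a x < seq0 a 0" using seq0_same_pile_less[OF zero_in_pile_zero] x by simp
  then show False by (simp add: seq0_def)
qed

lemma pile_of_less:
  assumes "x \<in> {1..n}" "y \<in> {1..n}" "precedes a x y"
  shows "pile_of x < pile_of y"
proof -
  have "seq0 a x < seq0 a y" using assms unfolding precedes_def seq0_def by simp
  then show ?thesis
    using monotone in_pile_of[of x] in_pile_of[of y] assms unfolding piles_monotone_def precedes_def
    by simp
qed

lemma pedge_same_pile:
  assumes "u \<in> set (piles a n p)" "v \<in> set (piles a n p)" "u \<noteq> v" "1 \<le> p"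
  shows "pedge a n u v"
  using seq0_same_pile_less[OF assms(1,2)] seq0_same_pile_less[OF assms(2,1)]
    in_pile_range[OF assms(1,4)] in_pile_range[OF assms(2,4)] assms(3)
  unfolding pedge_def seq0_def by (auto simp: neq_iff)

lemma not_pedge_precedes:
  assumes "x \<in> {1..n}" "y \<in> {1..n}" "x \<noteq> y" "\<not> pedge a n x y"
  shows "precedes a x y \<or> precedes a y x"
proof -
  have "a x \<noteq> a y" using perm assms(1-3) unfolding is_perm_seq_def by (auto dest: inj_onD)
  then show ?thesis using assms unfolding pedge_def precedes_def by (auto simp: neq_iff)
qed

lemma feasible_inj_on_pile_of:
  assumes "feasible a n L"
  shows "inj_on pile_of L"
proof (rule inj_onI)
  fix x y assume xy: "x \<in> L" "y \<in> L" "pile_of x = pile_of y"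
  have "x \<in> {1..n}" "y \<in> {1..n}" using assms xy unfolding feasible_def by auto
  then show "x = y"
    using feasible_precedes[OF assms xy(1,2)] pile_of_less xy(3) by (metis less_irrefl)
qed

lemma feasible_precedes_if_pile_of_less:
  assumes "feasible a n L" "x \<in> L" "y \<in> L" "pile_of x < pile_of y"
  shows "precedes a x y"
proof -
  have "x \<in> {1..n}" "y \<in> {1..n}" using assms(1-3) unfolding feasible_def by auto
  then show ?thesis
    using feasible_precedes[OF assms(1-3)] pile_of_less assms(4) by (metis less_asym)
qed

(* Pile 0 holds only the sentinel index 0, so the elements of A lie in the piles 1..height. *)
definition height :: nat where
  "height = Max (pile_of ` {..n})"

lemma pile_of_le_height: "x \<le> n \<Longrightarrow> pile_of x \<le> height"
  unfolding height_def by simp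

lemma height_attained: "\<exists>w\<le>n. pile_of w = height"
proof -
  have "height \<in> pile_of ` {..n}" unfolding height_def by (intro Max_in) auto
  then show ?thesis by auto
qed

lemma feasible_pile_of_subset: "feasible a n L \<Longrightarrow> pile_of ` L \<subseteq> {1..height}"
  unfolding feasible_def using pile_of_pos pile_of_le_height by fastforce

lemma feasible_card_le_height:
  assumes "feasible a n L"
  shows "card L \<le> height"
proof -
  have "card L = card (pile_of ` L)" using card_image[OF feasible_inj_on_pile_of[OF assms]] by simp
  also have "\<dots> \<le> card {1..height}" using feasible_pile_of_subset[OF assms] by (intro card_mono) auto
  finally show ?thesis by simp
qed

lemma height_le_card_feasible: "\<exists>L. feasible a n L \<and> height \<le> card L"
proof -
  obtain w where w: "w \<le> n" "pile_of w = height" using height_attained by blast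
  obtain L where L: "finite L" "card L = Suc height" "\<forall>x\<in>L. x \<le> w \<and> seq0 a x \<le> seq0 a w"
    "\<forall>x\<in>L. \<forall>y\<in>L. x < y \<longrightarrow> seq0 a x < seq0 a y"
    using piles_linked_chain[OF linked in_pile_of[OF w(1)]] w(2) by auto
  have "feasible a n (L - {0})"
    using L(3,4) w(1) unfolding feasible_def seq0_def by fastforce
  moreover have "height \<le> card (L - {0})" using L(1,2) by (simp add: card_Diff_singleton_if)
  ultimately show ?thesis by blast
qed

lemma max_feasible_pile_of_image:
  assumes "max_feasible a n L"
  shows "pile_of ` L = {1..height}"
proof -
  have feas: "feasible a n L" using assms unfolding max_feasible_def by blast
  have "height \<le> card L"
    using assms height_le_card_feasible unfolding max_feasible_def by (meson order_trans)
  then have "card (pile_of ` L) = card {1..height}"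
    using card_image[OF feasible_inj_on_pile_of[OF feas]] feasible_card_le_height[OF feas] by simp
  then show ?thesis using feasible_pile_of_subset[OF feas] by (simp add: card_subset_eq)
qed

lemma max_feasible_exchange:
  assumes max: "max_feasible a n L" and e: "e \<in> L" and c: "c \<in> {1..n}"
    and below: "\<forall>x\<in>L. pile_of x < pile_of e \<longrightarrow> precedes a x c"
    and next_pile: "\<forall>x\<in>L. pile_of x = Suc (pile_of e) \<longrightarrow> precedes a c x"
  shows "feasible a n ((L - {e}) \<union> {c})"
proof -
  have feas: "feasible a n L" using max unfolding max_feasible_def by blast
  have above: "precedes a c x" if x: "x \<in> L" "pile_of e < pile_of x" for x
  proof -
    have "Suc (pile_of e) \<in> pile_of ` L"
      using max_feasible_pile_of_image[OF max] imageI[OF x(1), of pile_of] x(2) by auto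
    then obtain y where y: "y \<in> L" "pile_of y = Suc (pile_of e)" by auto
    show ?thesis
    proof (cases "pile_of x = Suc (pile_of e)")
      case False
      then have "pile_of y < pile_of x" using x(2) y(2) by simp
      then show ?thesis
        using next_pile y precedes_trans feasible_precedes_if_pile_of_less[OF feas y(1) x(1)] by blast
    qed (use next_pile x in blast)
  qed
  have "pile_of x \<noteq> pile_of e" if "x \<in> L - {e}" for x
    using that e feasible_inj_on_pile_of[OF feas] by (auto dest: inj_onD)
  then have "\<forall>x\<in>L - {e}. precedes a x c \<or> precedes a c x"
    using below above by (meson DiffD1 linorder_neqE_nat)
  then show ?thesis by (rule feasible_exchange[OF feas c])
qed

end

lemma mixed_swap: "mixed a n I J s \<longleftrightarrow> mixed a n J I s"
  unfolding mixed_def by (metis insert_commute)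

lemma leftmost_mixed_swap: "leftmost_mixed a n I J t \<longleftrightarrow> leftmost_mixed a n J I t"
  unfolding leftmost_mixed_def using mixed_swap by blast

locale bipartite_perm_piles = perm_piles +
  assumes bipartite: "perm_graph_bipartite a n"
begin

lemma pile_eq_pair:
  assumes p: "1 \<le> p" and yz: "y \<in> set (piles a n p)" "z \<in> set (piles a n p)" "y \<noteq> z"
  shows "set (piles a n p) = {y, z}"
proof -
  obtain X where X: "\<forall>u v. pedge a n u v \<longrightarrow> (u \<in> X \<longleftrightarrow> v \<notin> X)"
    using bipartite unfolding perm_graph_bipartite_def by blast
  have "x = y \<or> x = z" if x: "x \<in> set (piles a n p)" for x
  proof (rule ccontr)
    assume "\<not> (x = y \<or> x = z)"
    then have "pedge a n x y" "pedge a n y z" "pedge a n z x"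
      using pedge_same_pile[OF _ _ _ p] x yz by auto
    then show False using X by blast
  qed
  then show ?thesis using yz by blast
qed

lemma mixedI:
  assumes "1 \<le> p" "y \<in> set (piles a n p)" "z \<in> set (piles a n p)" "y \<in> I" "z \<in> J" "y \<noteq> z"
  shows "mixed a n I J p"
proof -
  have pair: "set (piles a n p) = {y, z}" using pile_eq_pair assms by blast
  then have "length (piles a n p) = 2"
    using distinct_card[OF distinct_pile, of p] assms(6) by simp
  then show ?thesis unfolding mixed_def using pair assms(4-6) by blast
qed

lemma leftmost_mixed_below:
  assumes maxI: "max_feasible a n I" and maxJ: "max_feasible a n J"
    and leftmost: "leftmost_mixed a n I J t" and j: "j \<in> J" "pile_of j = t"
  shows "\<forall>x\<in>I. pile_of x < t \<longrightarrow> precedes a x j"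
proof (intro ballI impI)
  fix x assume x: "x \<in> I" "pile_of x < t"
  have "pile_of x \<in> pile_of ` J"
    using max_feasible_pile_of_image[OF maxI] max_feasible_pile_of_image[OF maxJ] x(1) by blast
  then obtain z where z: "z \<in> J" "pile_of z = pile_of x" by auto
  have feasI: "feasible a n I" and feasJ: "feasible a n J"
    using maxI maxJ unfolding max_feasible_def by blast+
  have "z = x"
  proof (rule ccontr)
    assume "z \<noteq> x"
    have xz: "x \<in> {1..n}" "z \<in> {1..n}" using feasI feasJ x(1) z(1) unfolding feasible_def by auto
    then have "x \<in> set (piles a n (pile_of x))" "z \<in> set (piles a n (pile_of x))"
      using in_pile_of z(2) by (metis atLeastAtMost_iff)+
    then have "mixed a n I J (pile_of x)"
      using mixedI[OF pile_of_pos[OF xz(1)] _ _ x(1) z(1)] \<open>z \<noteq> x\<close> by blast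
    then show False using leftmost x(2) unfolding leftmost_mixed_def by blast
  qed
  then show "precedes a x j"
    using feasible_precedes_if_pile_of_less[OF feasJ] z j x(2) by simp
qed

lemma mixed_next_pile:
  assumes maxI: "max_feasible a n I" and maxJ: "max_feasible a n J"
    and no_forbidden: "no_forbidden_pairs a n I J" and mixed: "mixed a n I J t"
    and pile_t: "set (piles a n t) = {i, j}" and ij: "i \<in> I" "j \<in> J" "i \<noteq> j"
    and yz: "y \<in> I" "z \<in> J" "pile_of y = Suc t" "pile_of z = Suc t"
  shows "precedes a j y \<or> precedes a i z"
proof (rule ccontr)
  assume neg: "\<not> (precedes a j y \<or> precedes a i z)"
  have feasI: "feasible a n I" and feasJ: "feasible a n J"
    using maxI maxJ unfolding max_feasible_def by blast+
  have range: "i \<in> {1..n}" "j \<in> {1..n}" "y \<in> {1..n}" "z \<in> {1..n}"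
    using feasI feasJ ij yz unfolding feasible_def by auto
  have piles_ij: "pile_of i = t" "pile_of j = t" using pile_of_eq pile_t by auto
  have t: "1 \<le> t" using pile_of_pos[OF range(1)] piles_ij by simp
  have "precedes a i y" "precedes a j z"
    using feasible_precedes_if_pile_of_less[OF feasI ij(1) yz(1)]
      feasible_precedes_if_pile_of_less[OF feasJ ij(2) yz(2)] piles_ij yz(3,4) by simp_all
  then have non_edges: "\<not> pedge a n i y" "\<not> pedge a n j z" by (simp_all add: precedes_not_pedge)
  have "y \<noteq> z" using \<open>precedes a j z\<close> neg by blast
  have yz_pile: "y \<in> set (piles a n (Suc t))" "z \<in> set (piles a n (Suc t))"
    using in_pile_of range(3,4) yz(3,4) by (metis atLeastAtMost_iff)+
  have "pedge a n i j" using pedge_same_pile[of i t j] pile_t ij(3) t by simp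
  moreover have "pedge a n y z" using pedge_same_pile[OF yz_pile \<open>y \<noteq> z\<close>] by simp
  moreover have "pedge a n j y"
  proof (rule ccontr)
    assume "\<not> pedge a n j y"
    then have "precedes a j y \<or> precedes a y j"
      using not_pedge_precedes range(2,3) piles_ij(2) yz(3) by (metis n_not_Suc_n)
    then show False using neg pile_of_less[OF range(3,2)] piles_ij(2) yz(3) by auto
  qed
  moreover have "pedge a n z i"
  proof (rule ccontr)
    assume "\<not> pedge a n z i"
    then have "precedes a z i \<or> precedes a i z"
      using not_pedge_precedes range(4,1) piles_ij(1) yz(4) by (metis n_not_Suc_n)
    then show False using neg pile_of_less[OF range(4,1)] piles_ij(1) yz(4) by auto
  qed
  moreover have "distinct [i, j, y, z]"
    using ij(3) \<open>y \<noteq> z\<close> piles_ij yz(3,4) by auto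
  ultimately have "induces_C4 a n {i, j, y, z}"
    unfolding induces_C4_def using non_edges by blast
  moreover have "mixed a n I J (Suc t)"
    using mixedI[OF _ yz_pile yz(1,2) \<open>y \<noteq> z\<close>] by simp
  moreover have "set (piles a n t) \<union> set (piles a n (Suc t)) = {i, j, y, z}"
    using pile_t pile_eq_pair[OF _ yz_pile \<open>y \<noteq> z\<close>] by auto
  ultimately show False
    using no_forbidden mixed unfolding no_forbidden_pairs_def forbidden_pair_def by (metis n_not_Suc_n)
qed

end

theorem lemma4:
  fixes a :: "nat \<Rightarrow> nat" and n :: nat and I J :: "nat set" and t i j :: nat
  assumes "is_perm_seq a n"
    and "perm_graph_bipartite a n"
    and "max_feasible a n I" and "max_feasible a n J"
    and "no_forbidden_pairs a n I J"
    and "leftmost_mixed a n I J t"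
    and "set (piles a n t) = {i, j}" and "i \<in> I" and "j \<in> J" and "i \<noteq> j"
  shows "feasible a n ((I - {i}) \<union> {j}) \<or> feasible a n ((J - {j}) \<union> {i})"
proof -
  interpret bipartite_perm_piles a n
    using assms(1,2) by unfold_locales
  have piles_ij: "pile_of i = t" "pile_of j = t"
    using pile_of_eq assms(7) by auto
  have range: "i \<in> {1..n}" "j \<in> {1..n}"
    using assms(3,4,8,9) unfolding max_feasible_def feasible_def by blast+
  have below_I: "\<forall>x\<in>I. pile_of x < pile_of i \<longrightarrow> precedes a x j"
    using leftmost_mixed_below[OF assms(3,4,6,9)] piles_ij by simp
  have below_J: "\<forall>x\<in>J. pile_of x < pile_of j \<longrightarrow> precedes a x i"
    using leftmost_mixed_below[OF assms(4,3)] assms(6,8) piles_ij leftmost_mixed_swap by simp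
  have mixed: "mixed a n I J t"
    using assms(6) unfolding leftmost_mixed_def by blast
  have "(\<forall>y\<in>I. pile_of y = Suc (pile_of i) \<longrightarrow> precedes a j y) \<or>
        (\<forall>z\<in>J. pile_of z = Suc (pile_of j) \<longrightarrow> precedes a i z)"
    unfolding piles_ij using mixed_next_pile[OF assms(3,4,5) mixed assms(7-10)] by blast
  then show ?thesis
    using max_feasible_exchange[OF assms(3,8) range(2) below_I]
      max_feasible_exchange[OF assms(4,9) range(1) below_J] by blast
qed

end
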